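(* Let $n,d$ be positive integers, $y_1,\dots,y_n\in\{-1,1\}$ and $\bar{x}_1,\dots,\bar{x}_n\in\mathbb{R}^{d+1}$ (no probabilistic assumptions). Let $H:\mathbb{R}^{d+1}\to\mathbb{R}^{(d+1)\times(d+1)}$ be $H(\theta)=\sum_{i=1}^n\psi(y_i\bar{x}_i\cdot\theta)\,\bar{x}_i\bar{x}_i^{\top}$, where $\psi(z)=\frac{\phi(z)}{\Phi(z)}\big(z+\frac{\phi(z)}{\Phi(z)}\big)$, and let $$L=\sup_{\theta\in\mathbb{R}^{d+1}}\lambda_{\max}(H(\theta)),\qquad m=\inf_{\theta\in\mathbb{R}^{d+1}}\lambda_{\min}(H(\theta)).$$ Define, for integers $s\in[0,n]$, $$P(s)=\inf_{v\in\mathbb{S}^d}\min_{I\subset\{1,\dots,n\}:|I|=s}\sum_{i\in I}|\bar{x}_i\cdot v|^2,\qquad s^*=\inf_{u\in\mathbb{S}^d}\sum_{i=1}^n\mathds{1}_{(-\infty,0]}(y_i\bar{x}_i\cdot u).$$ Then: (i) $L/m<\infty$ if and only if $\mathrm{Span}((\bar{x}_i)_{i\in I_u})=\mathbb{R}^{d+1}$ for every $u\in\mathbb{S}^d$, where $I_u=\{i\in\{1,\dots,n\}: y_i\bar{x}_i\cdot u\le 0\}$. (ii) If $(\bar{x}_i)_{i\in I}$ spans $\mathbb{R}^{d+1}$ for every $I\subset\{1,\dots,n\}$ with $|I|>d$, then $L/m<\infty$ if and only if $s^*>d$. (iii) $L/m\le \frac{\pi}{2}\,\lambda_{\max}\big(\sum_{i=1}^n\bar{x}_i\bar{x}_i^{\top}\big)/P(s^*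 )$.
   Context: $\Phi$ and $\phi$ denote the c.d.f. and p.d.f. of the standard normal distribution. $\mathbb{S}^d=\{v\in\mathbb{R}^{d+1}:|v|=1\}$. $\lambda_{\max},\lambda_{\min}$ are the largest and smallest eigenvalues of a symmetric positive semidefinite matrix. The ratio $L/m\in[1,\infty]$ is called the condition number, with $L/m=\infty$ when $m=0$. $H$ is the Hessian of the probit negative log-likelihood $\theta\mapsto-\sum_{i=1}^n\ln\Phi(y_i\bar{x}_i\cdot\theta)$. *)

theory Defs
  imports "HOL-Probability.Probability"
begin

definition std_phi :: "real \<Rightarrow> real" where
  "std_phi z = std_normal_density z"

definition std_Phi :: "real \<Rightarrow> real" where
  "std_Phi z = (LINT t:{..z}|lborel. std_normal_density t)"

definition psi :: "real \<Rightarrow> real" where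
  "psi z = std_phi z / std_Phi z * (z + std_phi z / std_Phi z)"

definition outer :: "real^'n \<Rightarrow> real^'n^'n" where
  "outer v = (\<chi> i j. v $ i * v $ j)"

definition eigenvalues :: "real^'n^'n \<Rightarrow> real set" where
  "eigenvalues A = {c. \<exists>v. v \<noteq> 0 \<and> A *v v = c *\<^sub>R v}"

definition lambda_max :: "real^'n^'n \<Rightarrow> real" where
  "lambda_max A = Max (eigenvalues A)"

definition lambda_min :: "real^'n^'n \<Rightarrow> real" where
  "lambda_min A = Min (eigenvalues A)"

text \<open>Hessian of the probit negative log-likelihood; data indexed by i < N.\<close>
definition hess :: "nat \<Rightarrow> (nat \<Rightarrow> real) \<Rightarrow> (nat \<Rightarrow> real^'n) \<Rightarrow> real^'n \<Rightarrow> real^'n^'n" where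
  "hess N y x \<theta> = (\<Sum>i<N. psi (y i * (x i \<bullet> \<theta>)) *\<^sub>R outer (x i))"

definition L_const :: "nat \<Rightarrow> (nat \<Rightarrow> real) \<Rightarrow> (nat \<Rightarrow> real^'n) \<Rightarrow> real" where
  "L_const N y x = (SUP \<theta>. lambda_max (hess N y x \<theta>))"

definition m_const :: "nat \<Rightarrow> (nat \<Rightarrow> real) \<Rightarrow> (nat \<Rightarrow> real^'n) \<Rightarrow> real" where
  "m_const N y x = (INF \<theta>. lambda_min (hess N y x \<theta>))"

definition cond_num :: "nat \<Rightarrow> (nat \<Rightarrow> real) \<Rightarrow> (nat \<Rightarrow> real^'n) \<Rightarrow> ereal" where
  "cond_num N y x = (if m_const N y x = 0 then \<infinity>
                     else ereal (L_const N y x / m_const N y x))"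

definition P_fun :: "nat \<Rightarrow> (nat \<Rightarrow> real^'n) \<Rightarrow> nat \<Rightarrow> real" where
  "P_fun N x s = (INF v\<in>sphere 0 1.
      Min ((\<lambda>I. \<Sum>i\<in>I. \<bar>x i \<bullet> v\<bar>\<^sup>2) ` {I. I \<subseteq> {..<N} \<and> card I = s}))"

definition s_star :: "nat \<Rightarrow> (nat \<Rightarrow> real) \<Rightarrow> (nat \<Rightarrow> real^'n) \<Rightarrow> nat" where
  "s_star N y x = (INF u\<in>(sphere 0 1 :: (real^'n) set).
      (\<Sum>i<N. (indicator {..0::real} (y i * (x i \<bullet> u)) :: nat)))"

definition I_u :: "nat \<Rightarrow> (nat \<Rightarrow> real) \<Rightarrow> (nat \<Rightarrow> real^'n) \<Rightarrow> real^'n \<Rightarrow> nat set" where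
  "I_u N y x u = {i. i < N \<and> y i * (x i \<bullet> u) \<le> 0}"

end

theory Submission
  imports Defs "HOL-Real_Asymp.Real_Asymp"
begin

(* Write psi z = r (z + r), where r = phi z / Phi z is the Mills ratio. Comparing r with the
   positive root of rho (rho + z) = c / 4 (with c = 4 everywhere, and with c = 8 / pi for z <= 0)
   gives 0 <= psi <= 1, psi >= 2 / pi for z <= 0, and psi z -> 0 as z -> \<infinity>.
   Hence H(theta) <= sum_i x_i x_i^T, so L <= lambda_max (sum_i x_i x_i^T). For u = theta / |theta|
   the indices with y_i x_i . theta <= 0 are exactly those in I_u, so v^T H(theta) v is at least
   (2 / pi) sum_{i in I_u} (x_i . v)^2; this gives m >= (2 / pi) P(s_star), and m > 0 when every
   I_u spans. Conversely, if some I_u does not span, pick v orthogonal to it: along theta = t u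
   with t -> \<infinity> every term of v^T H(theta) v tends to 0, so m = 0. *)

section \<open>The standard normal distribution\<close>

lemma std_phi_eq: "std_phi z = exp (- z\<^sup>2 / 2) / sqrt (2 * pi)"
  by (simp add: std_phi_def std_normal_density_def)

lemma std_phi_pos: "std_phi z > 0"
  by (simp add: std_phi_eq)

lemma continuous_on_std_phi: "continuous_on S std_phi"
  unfolding std_phi_eq[abs_def] by (intro continuous_intros) auto

lemma std_phi_deriv: "(std_phi has_real_derivative - z * std_phi z) (at z)"
  unfolding std_phi_eq[abs_def]
  by (auto intro!: derivative_eq_intros simp: power2_eq_square field_simps)

lemma std_Phi_eq_cdf: "std_Phi = cdf std_normal_distribution"
proof
  fix z
  have "cdf std_normal_distribution z = integral\<^sup>L std_normal_distribution (indicator {..z})"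
    by (simp add: cdf_def prob_space.emeasure_space_1[OF prob_space_normal_density])
  also have "\<dots> = integral\<^sup>L lborel (\<lambda>t. std_normal_density t *\<^sub>R indicator {..z} t)"
    by (subst integral_density) auto
  finally show "std_Phi z = cdf std_normal_distribution z"
    by (simp add: std_Phi_def set_lebesgue_integral_def mult.commute)
qed

interpretation std_normal: real_distribution std_normal_distribution
  by (rule real_dist_normal_dist)

lemma std_Phi_diff:
  assumes "a < b" shows "std_Phi b - std_Phi a = integral {a..b} std_phi"
proof -
  have "std_Phi b - std_Phi a = measure std_normal_distribution {a<..b}"
    unfolding std_Phi_eq_cdf using assms by (rule std_normal.cdf_diff_eq)
  also have "\<dots> = integral\<^sup>L lborel (\<lambda>t. std_normal_density t *\<^sub>R indicator {a<..b} t)"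
    by (subst integral_density[symmetric]) auto
  also have "\<dots> = (LINT t:{a<..b}|lborel. std_phi t)"
    by (simp add: std_phi_def set_lebesgue_integral_def mult.commute)
  also have "\<dots> = integral {a<..b} std_phi"
  proof (rule set_borel_integral_eq_integral(2))
    show "set_integrable lborel {a<..b} std_phi"
      unfolding set_integrable_def std_phi_def by (rule integrable_mult_indicator) auto
  qed
  also have "\<dots> = integral {a..b} std_phi"
  proof (rule integral_spike_set)
    show "negligible {t \<in> {a<..b} - {a..b}. std_phi t \<noteq> 0}"
      by (rule negligible_subset[of "{}"]) auto
    show "negligible {t \<in> {a..b} - {a<..b}. std_phi t \<noteq> 0}"
      by (rule negligible_subset[of "{a}"]) auto
  qed
  finally show ?thesis .
qed

lemma std_Phi_deriv: "(std_Phi has_real_derivative std_phi z) (at z)"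
proof -
  have "((\<lambda>t. integral {z - 1..t} std_phi) has_real_derivative std_phi z) (at z within {z - 1..z + 1})"
    by (rule integral_has_real_derivative) (auto intro: continuous_on_std_phi)
  then have "((\<lambda>t. integral {z - 1..t} std_phi) has_real_derivative std_phi z) (at z)"
    by (simp add: at_within_Icc_at)
  from DERIV_add[OF DERIV_const this]
  have "((\<lambda>t. std_Phi (z - 1) + integral {z - 1..t} std_phi) has_real_derivative std_phi z) (at z)"
    by simp
  then show ?thesis
  proof (rule has_field_derivative_transform_within_open[where S = "{z - 1<..<z + 1}"])
    fix t assume "t \<in> {z - 1<..<z + 1}"
    then show "std_Phi (z - 1) + integral {z - 1..t} std_phi = std_Phi t"
      using std_Phi_diff[of "z - 1" t] by auto
  qed auto
qed

lemma std_Phi_at_bot: "(std_Phi \<longlongrightarrow> 0) at_bot"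
  unfolding std_Phi_eq_cdf by (rule std_normal.cdf_lim_at_bot)

lemma std_Phi_at_top: "(std_Phi \<longlongrightarrow> 1) at_top"
  unfolding std_Phi_eq_cdf by (rule std_normal.cdf_lim_at_top_prob)

lemma std_Phi_pos: "std_Phi z > 0"
proof -
  have "std_Phi (z - 1) < std_Phi z"
    by (rule DERIV_pos_imp_increasing[of "z - 1"]) (auto intro: std_Phi_deriv std_phi_pos)
  then show ?thesis
    using std_normal.cdf_nonneg[of "z - 1"] by (simp add: std_Phi_eq_cdf)
qed

lemma std_Phi_uminus: "std_Phi (- z) = 1 - std_Phi z"
proof -
  let ?f = "\<lambda>w. std_Phi w + std_Phi (- w)"
  have "(?f has_real_derivative 0) (at w)" for w
  proof -
    have "((\<lambda>w. std_Phi (- w)) has_real_derivative std_phi (- w) * (- 1)) (at w)"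
      by (rule DERIV_chain2[OF std_Phi_deriv]) (auto intro!: derivative_eq_intros)
    from DERIV_add[OF std_Phi_deriv this] show ?thesis
      by (simp add: std_phi_eq)
  qed
  then have const: "?f = (\<lambda>_. ?f z)"
    using DERIV_isconst_all by blast
  have "(?f \<longlongrightarrow> 1 + 0) at_top"
    by (intro tendsto_add std_Phi_at_top
        filterlim_compose[OF std_Phi_at_bot filterlim_uminus_at_bot_at_top])
  then have "?f z = 1"
    unfolding const by (simp add: tendsto_const_iff)
  then show ?thesis
    by simp
qed

lemma std_Phi_0: "std_Phi 0 = 1 / 2"
  using std_Phi_uminus[of 0] by simp

section \<open>The Mills ratio and the weight psi\<close>

definition mills_ratio :: "real \<Rightarrow> real" where
  "mills_ratio z = std_phi z / std_Phi z"

lemma mills_ratio_pos: "mills_ratio z > 0"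
  by (simp add: mills_ratio_def std_phi_pos std_Phi_pos)

lemma psi_eq_mills_ratio: "psi z = mills_ratio z * (z + mills_ratio z)"
  by (simp add: psi_def mills_ratio_def)

definition mills_root :: "real \<Rightarrow> real \<Rightarrow> real" where
  "mills_root c z = (sqrt (z\<^sup>2 + c) - z) / 2"

lemma abs_less_sqrt_square_plus:
  assumes "c > 0" shows "\<bar>z\<bar> < sqrt (z\<^sup>2 + c)"
  using assms by (intro real_less_rsqrt) (simp add: power2_abs)

lemma mills_root_pos:
  assumes "c > 0" shows "mills_root c z > 0" and "mills_root c z + z > 0"
  using abs_less_sqrt_square_plus[OF assms, of z] by (auto simp: mills_root_def abs_less_iff field_simps)

lemma mills_root_equation:
  assumes "c > 0" shows "mills_root c z * (mills_root c z + z) = c / 4"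
proof -
  have "(sqrt (z\<^sup>2 + c))\<^sup>2 = z\<^sup>2 + c"
    using assms by (intro real_sqrt_pow2) (simp add: add_nonneg_pos)
  then show ?thesis
    by (simp add: mills_root_def field_simps power2_eq_square)
qed

lemma mills_root_deriv:
  assumes "c > 0"
  shows "(mills_root c has_real_derivative (z / sqrt (z\<^sup>2 + c) - 1) / 2) (at z)"
proof -
  have "z\<^sup>2 + c > 0"
    using assms by (simp add: add_nonneg_pos)
  then show ?thesis
    unfolding mills_root_def[abs_def]
    by (auto intro!: derivative_eq_intros simp: field_simps)
qed

definition mills_gap :: "real \<Rightarrow> real \<Rightarrow> real" where
  "mills_gap c z = std_phi z / mills_root c z - std_Phi z"

lemma mills_gap_nonpos_iff:
  assumes "c > 0" shows "mills_gap c z \<le> 0 \<longleftrightarrow> mills_ratio z \<le> mills_root c z"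
  using mills_root_pos(1)[OF assms, of z] std_Phi_pos[of z]
  by (simp add: mills_gap_def mills_ratio_def divide_le_eq mult.commute)

lemma mills_gap_nonneg_iff:
  assumes "c > 0" shows "0 \<le> mills_gap c z \<longleftrightarrow> mills_root c z \<le> mills_ratio z"
  using mills_root_pos(1)[OF assms, of z] std_Phi_pos[of z]
  by (simp add: mills_gap_def mills_ratio_def le_divide_eq mult.commute)

lemma mills_gap_deriv:
  assumes c: "c > 0"
  shows "(mills_gap c has_real_derivative
           std_phi z * ((1 - z / sqrt (z\<^sup>2 + c)) / 2 - c / 4) / (mills_root c z)\<^sup>2) (at z)"
proof -
  define r where "r = mills_root c z"
  have r: "r > 0" and c4: "c / 4 = r * (r + z)"
    using mills_root_pos[OF c] mills_root_equation[OF c] by (auto simp: r_def)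
  have "(mills_gap c has_real_derivative
          (- z * std_phi z * r - std_phi z * ((z / sqrt (z\<^sup>2 + c) - 1) / 2)) / (r * r) - std_phi z) (at z)"
    unfolding mills_gap_def[abs_def] r_def
    by (intro DERIV_diff DERIV_divide std_phi_deriv mills_root_deriv std_Phi_deriv c)
      (use r in \<open>simp add: r_def\<close>)
  moreover have "(- z * std_phi z * r - std_phi z * ((z / sqrt (z\<^sup>2 + c) - 1) / 2)) / (r * r) - std_phi z
      = std_phi z * ((1 - z / sqrt (z\<^sup>2 + c)) / 2 - c / 4) / r\<^sup>2"
    unfolding c4 using r by (simp add: field_simps power2_eq_square)
  ultimately show ?thesis
    by (simp add: r_def)
qed

lemma mills_gap_tendsto_at_bot:
  assumes "c > 0" shows "(mills_gap c \<longlongrightarrow> 0) at_bot"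
proof -
  have "((\<lambda>z. std_phi z / mills_root c z) \<longlongrightarrow> 0) at_bot"
    unfolding std_phi_eq mills_root_def using assms by real_asymp
  then have "(mills_gap c \<longlongrightarrow> 0 - 0) at_bot"
    unfolding mills_gap_def[abs_def] by (intro tendsto_diff std_Phi_at_bot)
  then show ?thesis
    by simp
qed

lemma mills_ratio_le_mills_root: "mills_ratio z \<le> mills_root 4 z"
proof -
  have "mills_gap 4 z \<le> mills_gap 4 w" if "w \<le> z" for w
  proof (rule DERIV_nonpos_imp_nonincreasing[OF that])
    fix t
    have "- t < sqrt (t\<^sup>2 + 4)" "0 < sqrt (t\<^sup>2 + 4)"
      using abs_less_sqrt_square_plus[of 4 t] by linarith+
    then have "(1 - t / sqrt (t\<^sup>2 + 4)) / 2 - 4 / 4 \<le> 0"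
      by (simp add: field_simps)
    then show "\<exists>d. (mills_gap 4 has_real_derivative d) (at t) \<and> d \<le> 0"
      using mills_gap_deriv[of 4 t] std_phi_pos[of t]
      by (auto intro!: divide_nonpos_nonneg mult_nonneg_nonpos)
  qed
  then have "mills_gap 4 z \<le> 0"
    by (intro tendsto_lowerbound[OF mills_gap_tendsto_at_bot])
      (auto simp: eventually_at_bot_linorder)
  then show ?thesis
    by (simp add: mills_gap_nonpos_iff)
qed

lemma neg_div_sqrt_square_plus_antimono:
  assumes "w \<le> z" "z \<le> 0" "c > 0"
  shows "- z / sqrt (z\<^sup>2 + c) \<le> - w / sqrt (w\<^sup>2 + c)"
proof -
  have "(- z)\<^sup>2 \<le> (- w)\<^sup>2"
    using assms by (intro power_mono) auto
  then have "sqrt (z\<^sup>2 * (w\<^sup>2 + c)) \<le> sqrt (w\<^sup>2 * (z\<^sup>2 + c))"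
    using assms by (simp add: algebra_simps mult_right_mono)
  then have "- z * sqrt (w\<^sup>2 + c) \<le> - w * sqrt (z\<^sup>2 + c)"
    using assms by (simp add: real_sqrt_mult)
  moreover have "sqrt (w\<^sup>2 + c) > 0" "sqrt (z\<^sup>2 + c) > 0"
    using assms by (auto intro: add_nonneg_pos)
  ultimately show ?thesis
    by (simp add: divide_le_eq_1 field_simps)
qed

lemma mills_gap_0: "mills_gap (8 / pi) 0 = 0"
proof -
  have "sqrt (2 * pi) * sqrt (8 / pi) = 4"
    by (simp add: real_sqrt_mult[symmetric])
  then show ?thesis
    by (simp add: mills_gap_def mills_root_def std_phi_eq std_Phi_0 field_simps)
qed

lemma mills_root_le_mills_ratio:
  assumes z: "z \<le> 0"
  shows "mills_root (8 / pi) z \<le> mills_ratio z"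
proof -
  define c where "c = 8 / pi"
  define k where "k = 4 / pi - 1"
  define q where "q t = - t / sqrt (t\<^sup>2 + c)" for t
  have c: "c > 0"
    by (simp add: c_def)
  have deriv_sign: "(1 - t / sqrt (t\<^sup>2 + c)) / 2 - c / 4 = (q t - k) / 2" for t
    by (simp add: q_def k_def c_def field_simps)
  have q_antimono: "q t \<le> q w" if "w \<le> t" "t \<le> 0" for w t
    unfolding q_def using that c by (rule neg_div_sqrt_square_plus_antimono)
  \<comment> \<open>mills_gap c vanishes at -\<infinity> and at 0, increases while q \<ge> k and decreases afterwards\<close>
  have "0 \<le> mills_gap c z"
  proof (cases "k \<le> q z")
    case True
    have "mills_gap c w \<le> mills_gap c z" if "w \<le> z" for w
    proof (rule DERIV_nonneg_imp_nondecreasing[OF that])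
      fix t assume "w \<le> t" "t \<le> z"
      then have "k \<le> q t"
        using True q_antimono[of t z] z by linarith
      then show "\<exists>d. (mills_gap c has_real_derivative d) (at t) \<and> 0 \<le> d"
        using mills_gap_deriv[OF c, of t] std_phi_pos[of t] by (auto simp: deriv_sign)
    qed
    then show ?thesis
      by (intro tendsto_upperbound[OF mills_gap_tendsto_at_bot[OF c]])
        (auto simp: eventually_at_bot_linorder)
  next
    case False
    have "mills_gap c 0 \<le> mills_gap c z"
    proof (rule DERIV_nonpos_imp_nonincreasing[OF z])
      fix t assume "z \<le> t" "t \<le> 0"
      then have "q t < k"
        using False q_antimono[of z t] by linarith
      then show "\<exists>d. (mills_gap c has_real_derivative d) (at t) \<and> d \<le> 0"
        using mills_gap_deriv[OF c, of t] std_phi_pos[of t]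
        by (auto simp: deriv_sign intro!: divide_nonpos_nonneg mult_nonneg_nonpos)
    qed
    then show ?thesis
      using mills_gap_0 by (simp add: c_def)
  qed
  then show ?thesis
    using mills_gap_nonneg_iff[OF c] by (simp add: c_def)
qed

lemma psi_minus_mills_root:
  assumes "c > 0"
  shows "psi z - c / 4 = (mills_ratio z - mills_root c z) * (mills_ratio z + mills_root c z + z)"
  using mills_root_equation[OF assms, of z]
  by (simp add: psi_eq_mills_ratio algebra_simps)

lemma psi_le_1: "psi z \<le> 1"
proof -
  have "psi z - 4 / 4 = (mills_ratio z - mills_root 4 z) * (mills_ratio z + mills_root 4 z + z)"
    by (rule psi_minus_mills_root) simp
  also have "\<dots> \<le> 0"
    using mills_ratio_le_mills_root[of z] mills_ratio_pos[of z] mills_root_pos[of 4 z]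
    by (intro mult_nonpos_nonneg) auto
  finally show ?thesis
    by simp
qed

lemma psi_ge_2_div_pi:
  assumes "z \<le> 0" shows "2 / pi \<le> psi z"
proof -
  have "0 \<le> (mills_ratio z - mills_root (8 / pi) z) * (mills_ratio z + mills_root (8 / pi) z + z)"
    using mills_root_le_mills_ratio[OF assms] mills_root_pos[of "8 / pi" z]
    by (intro mult_nonneg_nonneg) auto
  also have "\<dots> = psi z - (8 / pi) / 4"
    by (rule psi_minus_mills_root[symmetric]) simp
  finally show ?thesis
    by simp
qed

lemma psi_nonneg: "0 \<le> psi z"
proof (cases "z \<le> 0")
  case True
  have "0 < 2 / pi"
    by simp
  then show ?thesis
    using psi_ge_2_div_pi[OF True] by linarith
next
  case False
  then show ?thesis
    using mills_ratio_pos[of z] by (simp add: psi_eq_mills_ratio)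
qed

lemma psi_tendsto_at_top: "(psi \<longlongrightarrow> 0) at_top"
proof -
  have phi: "(std_phi \<longlongrightarrow> 0) at_top" "((\<lambda>z. z * std_phi z) \<longlongrightarrow> 0) at_top"
    unfolding std_phi_eq by real_asymp+
  have "(mills_ratio \<longlongrightarrow> 0 / 1) at_top" "((\<lambda>z. z * mills_ratio z) \<longlongrightarrow> 0 / 1) at_top"
    unfolding mills_ratio_def[abs_def] times_divide_eq_right
    by (intro tendsto_divide phi std_Phi_at_top; simp)+
  then have "((\<lambda>z. z * mills_ratio z + mills_ratio z * mills_ratio z) \<longlongrightarrow> 0 + 0 * 0) at_top"
    by (intro tendsto_intros) auto
  then show ?thesis
    by (simp add: psi_eq_mills_ratio[abs_def] distrib_left mult.commute)
qed

section \<open>Extreme eigenvalues of symmetric matrices\<close>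

lemma inner_matrix_vector_mult_commute:
  fixes A :: "real^'n^'n"
  assumes "transpose A = A"
  shows "u \<bullet> (A *v v) = v \<bullet> (A *v u)"
proof -
  have "u \<bullet> (A *v v) = (u v* transpose A) \<bullet> v"
    by (simp add: assms dot_lmul_matrix)
  then show ?thesis
    by (simp add: inner_commute)
qed

lemma linear_coeff_zero_if_nonneg_quadratic:
  fixes a b :: real
  assumes "\<And>t. 0 \<le> t * a + t\<^sup>2 * b"
  shows "a = 0"
proof (rule ccontr)
  assume "a \<noteq> 0"
  define d where "d = \<bar>b\<bar> + 1"
  have d: "d > 0" "b < d"
    by (auto simp: d_def)
  have "0 \<le> (- a / d) * a + (- a / d)\<^sup>2 * b"
    by (rule assms)
  also have "\<dots> = a\<^sup>2 * (b - d) / d\<^sup>2"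
    using d by (simp add: field_simps power2_eq_square)
  also have "\<dots> < 0"
    using \<open>a \<noteq> 0\<close> d by (intro divide_neg_pos mult_pos_neg) auto
  finally show False
    by simp
qed

lemma quadratic_form_ge_if_ge_on_sphere:
  fixes A :: "real^'n^'n"
  assumes "\<And>w. w \<in> sphere 0 1 \<Longrightarrow> \<mu> \<le> w \<bullet> (A *v w)"
  shows "\<mu> * (norm w)\<^sup>2 \<le> w \<bullet> (A *v w)"
proof (cases "w = 0")
  case False
  define u where "u = (1 / norm w) *\<^sub>R w"
  have "\<mu> \<le> u \<bullet> (A *v u)"
    using False by (intro assms) (simp add: u_def)
  also have "\<dots> = (w \<bullet> (A *v w)) / (norm w)\<^sup>2"
    by (simp add: u_def matrix_vector_mult_scaleR power2_eq_square)
  finally show ?thesis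
    using False by (simp add: le_divide_eq)
qed simp

(* The residual p = A v - mu v is orthogonal to v, so along v + t p the quadratic form exceeds
   mu |v + t p|^2 by 2 t |p|^2 + O(t^2); minimality of mu on the sphere forces p = 0. *)
lemma sphere_minimizer_is_eigenvector:
  fixes A :: "real^'n^'n"
  assumes A: "transpose A = A" and v: "v \<in> sphere 0 1"
    and min: "\<And>w. w \<in> sphere 0 1 \<Longrightarrow> v \<bullet> (A *v v) \<le> w \<bullet> (A *v w)"
  shows "A *v v = (v \<bullet> (A *v v)) *\<^sub>R v"
proof -
  define \<mu> where "\<mu> = v \<bullet> (A *v v)"
  define p where "p = A *v v - \<mu> *\<^sub>R v"
  have vv: "v \<bullet> v = 1"
    using v by (simp add: dot_square_norm)
  have pAv: "p \<bullet> (A *v v) - \<mu> * (v \<bullet> p) = p \<bullet> p"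
    by (simp add: p_def inner_diff_left inner_diff_right inner_commute algebra_simps)
  have "0 \<le> t * (2 * (p \<bullet> p)) + t\<^sup>2 * (p \<bullet> (A *v p) - \<mu> * (p \<bullet> p))" for t
  proof -
    have "\<mu> * (norm (v + t *\<^sub>R p))\<^sup>2 \<le> (v + t *\<^sub>R p) \<bullet> (A *v (v + t *\<^sub>R p))"
      using min by (intro quadratic_form_ge_if_ge_on_sphere) (simp add: \<mu>_def)
    moreover have "(norm (v + t *\<^sub>R p))\<^sup>2 = 1 + 2 * t * (v \<bullet> p) + t\<^sup>2 * (p \<bullet> p)"
      unfolding power2_norm_eq_inner
      by (simp add: inner_add_left inner_add_right vv inner_commute power2_eq_square algebra_simps)
    moreover have "(v + t *\<^sub>R p) \<bullet> (A *v (v + t *\<^sub>R p))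
        = \<mu> + 2 * t * (p \<bullet> (A *v v)) + t\<^sup>2 * (p \<bullet> (A *v p))"
      using inner_matrix_vector_mult_commute[OF A, of v p]
      by (simp add: matrix_vector_right_distrib matrix_vector_mult_scaleR inner_add_left
          inner_add_right \<mu>_def power2_eq_square algebra_simps inner_commute)
    ultimately have "0 \<le> 2 * t * (p \<bullet> (A *v v) - \<mu> * (v \<bullet> p)) + t\<^sup>2 * (p \<bullet> (A *v p) - \<mu> * (p \<bullet> p))"
      by (simp add: algebra_simps)
    then show ?thesis
      by (simp only: pAv mult.assoc mult.left_commute)
  qed
  then have "2 * (p \<bullet> p) = 0"
    by (rule linear_coeff_zero_if_nonneg_quadratic)
  then show ?thesis
    by (simp add: p_def \<mu>_def)
qed

lemma finite_eigenvalues: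
  fixes A :: "real^'n^'n"
  assumes A: "transpose A = A"
  shows "finite (eigenvalues A)"
proof -
  define e where "e c = (SOME v. v \<noteq> 0 \<and> A *v v = c *\<^sub>R v)" for c
  have e: "e c \<noteq> 0 \<and> A *v e c = c *\<^sub>R e c" if "c \<in> eigenvalues A" for c
    unfolding e_def by (rule someI_ex) (use that in \<open>simp add: eigenvalues_def\<close>)
  have orth: "e c \<bullet> e d = 0" if "c \<in> eigenvalues A" "d \<in> eigenvalues A" "c \<noteq> d" for c d
  proof -
    have "c * (e d \<bullet> e c) = e d \<bullet> (A *v e c)"
      using e[OF that(1)] by simp
    also have "\<dots> = e c \<bullet> (A *v e d)"
      by (rule inner_matrix_vector_mult_commute[OF A])
    also have "\<dots> = d * (e c \<bullet> e d)"
      using e[OF that(2)] by simp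
    finally have "(c - d) * (e c \<bullet> e d) = 0"
      by (simp add: inner_commute left_diff_distrib)
    then show ?thesis
      using that(3) by simp
  qed
  have inj: "inj_on e (eigenvalues A)"
  proof (rule inj_onI)
    fix c d assume cd: "c \<in> eigenvalues A" "d \<in> eigenvalues A" "e c = e d"
    have "c *\<^sub>R e c = A *v e d"
      using e[OF cd(1)] cd(3) by simp
    also have "\<dots> = d *\<^sub>R e c"
      using e[OF cd(2)] cd(3) by simp
    finally show "c = d"
      using e[OF cd(1)] by simp
  qed
  have "pairwise orthogonal (e ` eigenvalues A)"
    unfolding pairwise_def orthogonal_def using orth by blast
  moreover have "0 \<notin> e ` eigenvalues A"
    using e by fastforce
  ultimately have "finite (e ` eigenvalues A)"
    by (intro finiteI_independent pairwise_orthogonal_independent)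
  then show ?thesis
    using inj by (rule finite_imageD)
qed

lemma eigenvalue_eq_quadratic_form:
  fixes A :: "real^'n^'n"
  assumes "c \<in> eigenvalues A"
  obtains w where "w \<in> sphere 0 1" "c = w \<bullet> (A *v w)"
proof -
  obtain v where v: "v \<noteq> 0" "A *v v = c *\<^sub>R v"
    using assms by (auto simp: eigenvalues_def)
  define w where "w = (1 / norm v) *\<^sub>R v"
  have "w \<in> sphere 0 1" "w \<bullet> (A *v w) = c"
    using v by (simp_all add: w_def matrix_vector_mult_scaleR dot_square_norm power2_eq_square)
  then show ?thesis
    using that by simp
qed

lemma continuous_on_quadratic_form: "continuous_on S (\<lambda>w. w \<bullet> (A *v w))"
  for A :: "real^'n^'n"
  by (intro continuous_intros)

lemma lambda_min_eq_min_quadratic_form: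
  fixes A :: "real^'n^'n"
  assumes A: "transpose A = A"
  obtains v where "v \<in> sphere 0 1" "lambda_min A = v \<bullet> (A *v v)"
    and "\<And>w. w \<in> sphere 0 1 \<Longrightarrow> lambda_min A \<le> w \<bullet> (A *v w)"
proof -
  obtain v where v: "v \<in> sphere (0::real^'n) 1"
    and min: "\<And>w. w \<in> sphere 0 1 \<Longrightarrow> v \<bullet> (A *v v) \<le> w \<bullet> (A *v w)"
    using continuous_attains_inf[OF compact_sphere _ continuous_on_quadratic_form, of 0 1 A] by auto
  have ev: "v \<bullet> (A *v v) \<in> eigenvalues A"
    unfolding eigenvalues_def using sphere_minimizer_is_eigenvector[OF A v min] v
    by (auto intro!: exI[of _ v])
  have "lambda_min A = v \<bullet> (A *v v)"
    unfolding lambda_min_def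
  proof (rule Min_eqI[OF finite_eigenvalues[OF A] _ ev])
    fix c assume "c \<in> eigenvalues A"
    then obtain w where "w \<in> sphere 0 1" "c = w \<bullet> (A *v w)"
      by (rule eigenvalue_eq_quadratic_form)
    then show "v \<bullet> (A *v v) \<le> c"
      using min[of w] by simp
  qed
  then show ?thesis
    using min by (intro that[OF v]) auto
qed

lemma transpose_uminus: "transpose (- A) = - transpose A"
  by (simp add: transpose_def vec_eq_iff)

lemma matrix_vector_mult_uminus: "(- A) *v v = - (A *v v)"
  for A :: "real^'n^'m"
  by (simp add: matrix_vector_mult_def vec_eq_iff sum_negf)

lemma lambda_max_eq_max_quadratic_form:
  fixes A :: "real^'n^'n"
  assumes A: "transpose A = A"
  obtains v where "v \<in> sphere 0 1" "lambda_max A = v \<bullet> (A *v v)"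
    and "\<And>w. w \<in> sphere 0 1 \<Longrightarrow> w \<bullet> (A *v w) \<le> lambda_max A"
proof -
  obtain v where v: "v \<in> sphere (0::real^'n) 1"
    and max: "\<And>w. w \<in> sphere 0 1 \<Longrightarrow> w \<bullet> (A *v w) \<le> v \<bullet> (A *v v)"
    using continuous_attains_sup[OF compact_sphere _ continuous_on_quadratic_form, of 0 1 A] by auto
  have "(- A) *v v = (v \<bullet> ((- A) *v v)) *\<^sub>R v"
    using max
    by (intro sphere_minimizer_is_eigenvector v) (simp_all add: A transpose_uminus matrix_vector_mult_uminus)
  then have ev: "v \<bullet> (A *v v) \<in> eigenvalues A"
    unfolding eigenvalues_def using v by (auto simp: matrix_vector_mult_uminus intro!: exI[of _ v])
  have "lambda_max A = v \<bullet> (A *v v)"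
    unfolding lambda_max_def
  proof (rule Max_eqI[OF finite_eigenvalues[OF A] _ ev])
    fix c assume "c \<in> eigenvalues A"
    then obtain w where "w \<in> sphere 0 1" "c = w \<bullet> (A *v w)"
      by (rule eigenvalue_eq_quadratic_form)
    then show "c \<le> v \<bullet> (A *v v)"
      using max[of w] by simp
  qed
  then show ?thesis
    using max by (intro that[OF v]) auto
qed

section \<open>The probit Hessian\<close>

lemma weighted_outer_sum_mult_vector:
  fixes x :: "'i \<Rightarrow> real^'n"
  shows "(\<Sum>i\<in>I. w i *\<^sub>R outer (x i)) *v v = (\<Sum>i\<in>I. (w i * (x i \<bullet> v)) *\<^sub>R x i)"
  by (simp add: vec_eq_iff matrix_vector_mult_def outer_def inner_vec_def sum_component
      sum_distrib_left sum_distrib_right mult_ac sum.swap[of _ UNIV])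

lemma weighted_outer_sum_quadratic_form:
  fixes x :: "'i \<Rightarrow> real^'n"
  shows "v \<bullet> ((\<Sum>i\<in>I. w i *\<^sub>R outer (x i)) *v v) = (\<Sum>i\<in>I. w i * (x i \<bullet> v)\<^sup>2)"
  by (simp add: weighted_outer_sum_mult_vector inner_sum_right inner_commute power2_eq_square mult_ac)

lemma transpose_weighted_outer_sum:
  fixes x :: "'i \<Rightarrow> real^'n"
  shows "transpose (\<Sum>i\<in>I. w i *\<^sub>R outer (x i)) = (\<Sum>i\<in>I. w i *\<^sub>R outer (x i))"
  by (simp add: vec_eq_iff transpose_def outer_def sum_component mult.commute)

lemma outer_sum_quadratic_form:
  fixes x :: "'i \<Rightarrow> real^'n"
  shows "v \<bullet> ((\<Sum>i\<in>I. outer (x i)) *v v) = (\<Sum>i\<in>I. (x i \<bullet> v)\<^sup>2)"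
  using weighted_outer_sum_quadratic_form[where w = "\<lambda>_. 1"] by simp

lemma transpose_outer_sum:
  fixes x :: "'i \<Rightarrow> real^'n"
  shows "transpose (\<Sum>i\<in>I. outer (x i)) = (\<Sum>i\<in>I. outer (x i))"
  using transpose_weighted_outer_sum[where w = "\<lambda>_. 1"] by simp

lemma hess_quadratic_form:
  "v \<bullet> (hess N y x \<theta> *v v) = (\<Sum>i<N. psi (y i * (x i \<bullet> \<theta>)) * (x i \<bullet> v)\<^sup>2)"
  unfolding hess_def by (rule weighted_outer_sum_quadratic_form)

lemma transpose_hess: "transpose (hess N y x \<theta>) = hess N y x \<theta>"
  unfolding hess_def by (rule transpose_weighted_outer_sum)

lemma lambda_min_hess_nonneg: "0 \<le> lambda_min (hess N y x \<theta>)"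
proof -
  obtain v where "lambda_min (hess N y x \<theta>) = v \<bullet> (hess N y x \<theta> *v v)"
    using lambda_min_eq_min_quadratic_form[OF transpose_hess] by metis
  then show ?thesis
    by (simp add: hess_quadratic_form sum_nonneg psi_nonneg)
qed

lemma m_const_nonneg: "0 \<le> m_const N y x"
  unfolding m_const_def by (rule cINF_greatest) (auto intro: lambda_min_hess_nonneg)

lemma m_const_le_lambda_min: "m_const N y x \<le> lambda_min (hess N y x \<theta>)"
  unfolding m_const_def
  by (rule cINF_lower) (auto intro!: bdd_belowI[of _ 0] lambda_min_hess_nonneg)

lemma lambda_max_hess_le: "lambda_max (hess N y x \<theta>) \<le> lambda_max (\<Sum>i<N. outer (x i))"
proof -
  obtain v where v: "v \<in> sphere 0 1" "lambda_max (hess N y x \<theta>) = v \<bullet> (hess N y x \<theta> *v v)"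
    using lambda_max_eq_max_quadratic_form[OF transpose_hess] by metis
  have "v \<bullet> (hess N y x \<theta> *v v) \<le> v \<bullet> ((\<Sum>i<N. outer (x i)) *v v)"
    unfolding hess_quadratic_form outer_sum_quadratic_form
    by (intro sum_mono) (auto intro: mult_left_le_one_le psi_le_1 psi_nonneg)
  also have "\<dots> \<le> lambda_max (\<Sum>i<N. outer (x i))"
    using lambda_max_eq_max_quadratic_form[OF transpose_outer_sum] v(1) by metis
  finally show ?thesis
    using v(2) by simp
qed

lemma L_const_le: "L_const N y x \<le> lambda_max (\<Sum>i<N. outer (x i))"
  unfolding L_const_def by (rule cSUP_least) (auto intro: lambda_max_hess_le)

lemma lambda_max_outer_sum_nonneg: "0 \<le> lambda_max (\<Sum>i<N. outer (x i))"
  for x :: "nat \<Rightarrow> real^'n"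
proof -
  obtain v :: "real^'n" where v: "v \<in> sphere 0 1"
    using sphere_eq_empty[of "0::real^'n" 1] by fastforce
  have "0 \<le> v \<bullet> ((\<Sum>i<N. outer (x i)) *v v)"
    unfolding outer_sum_quadratic_form by (simp add: sum_nonneg)
  also have "\<dots> \<le> lambda_max (\<Sum>i<N. outer (x i))"
    using lambda_max_eq_max_quadratic_form[OF transpose_outer_sum] v by metis
  finally show ?thesis .
qed

lemma I_u_subset: "I_u N y x u \<subseteq> {..<N}"
  by (auto simp: I_u_def)

lemma finite_I_u: "finite (I_u N y x u)"
  using I_u_subset by (rule finite_subset) simp

lemma I_u_scaleR:
  assumes "c > 0" shows "I_u N y x (c *\<^sub>R u) = I_u N y x u"
proof -
  have "y i * (x i \<bullet> (c *\<^sub>R u)) \<le> 0 \<longleftrightarrow> y i * (x i \<bullet> u) \<le> 0" for i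
    using mult_le_cancel_left_pos[OF assms, of "y i * (x i \<bullet> u)" 0] by (simp add: mult.left_commute)
  then show ?thesis
    by (simp add: I_u_def)
qed

lemma exists_I_u_subset:
  fixes \<theta> :: "real^'n"
  obtains u where "u \<in> sphere 0 1" "I_u N y x u \<subseteq> I_u N y x \<theta>"
proof (cases "\<theta> = 0")
  case True
  obtain u :: "real^'n" where "u \<in> sphere 0 1"
    using sphere_eq_empty[of "0::real^'n" 1] by fastforce
  then show ?thesis
    by (intro that[of u]) (auto simp: True I_u_def)
next
  case False
  then show ?thesis
    using that[of "(1 / norm \<theta>) *\<^sub>R \<theta>"] by (simp add: I_u_scaleR)
qed

lemma lambda_min_hess_ge:
  fixes x :: "nat \<Rightarrow> real^'n"
  obtains u v where "u \<in> sphere 0 1" "v \<in> sphere 0 1"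
    and "2 / pi * (\<Sum>i\<in>I_u N y x u. (x i \<bullet> v)\<^sup>2) \<le> lambda_min (hess N y x \<theta>)"
proof -
  obtain v where v: "v \<in> sphere 0 1" "lambda_min (hess N y x \<theta>) = v \<bullet> (hess N y x \<theta> *v v)"
    using lambda_min_eq_min_quadratic_form[OF transpose_hess] by metis
  obtain u where u: "u \<in> sphere 0 1" "I_u N y x u \<subseteq> I_u N y x \<theta>"
    by (rule exists_I_u_subset)
  have "2 / pi * (\<Sum>i\<in>I_u N y x u. (x i \<bullet> v)\<^sup>2) = (\<Sum>i\<in>I_u N y x u. 2 / pi * (x i \<bullet> v)\<^sup>2)"
    by (simp add: sum_distrib_left)
  also have "\<dots> \<le> (\<Sum>i\<in>I_u N y x u. psi (y i * (x i \<bullet> \<theta>)) * (x i \<bullet> v)\<^sup>2)"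
    using u(2) by (intro sum_mono mult_right_mono psi_ge_2_div_pi) (auto simp: I_u_def)
  also have "\<dots> \<le> (\<Sum>i<N. psi (y i * (x i \<bullet> \<theta>)) * (x i \<bullet> v)\<^sup>2)"
    by (intro sum_mono2 I_u_subset) (auto simp: psi_nonneg)
  also have "\<dots> = lambda_min (hess N y x \<theta>)"
    using v(2) by (simp add: hess_quadratic_form)
  finally show ?thesis
    using that u(1) v(1) by blast
qed

lemma m_const_eq_0_if_not_spanning:
  fixes x :: "nat \<Rightarrow> real^'n"
  assumes u: "u \<in> sphere 0 1" and not_spanning: "span (x ` I_u N y x u) \<noteq> UNIV"
  shows "m_const N y x = 0"
proof -
  obtain a where a: "a \<noteq> 0" "\<And>z. z \<in> span (x ` I_u N y x u) \<Longrightarrow> a \<bullet> z = 0"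
    using span_not_UNIV_orthogonal[OF not_spanning] by blast
  define v where "v = (1 / norm a) *\<^sub>R a"
  have v: "v \<in> sphere 0 1"
    using a by (simp add: v_def)
  have orth: "x i \<bullet> v = 0" if "i \<in> I_u N y x u" for i
    using a(2)[of "x i"] that by (simp add: v_def span_base inner_commute)
  define f where "f t = (\<Sum>i<N. psi (y i * (x i \<bullet> (t *\<^sub>R u))) * (x i \<bullet> v)\<^sup>2)" for t
  have "m_const N y x \<le> f t" for t
  proof -
    have "m_const N y x \<le> lambda_min (hess N y x (t *\<^sub>R u))"
      by (rule m_const_le_lambda_min)
    also have "\<dots> \<le> v \<bullet> (hess N y x (t *\<^sub>R u) *v v)"
      using lambda_min_eq_min_quadratic_form[OF transpose_hess] v by metis
    finally show ?thesis
      by (simp add: hess_quadratic_form f_def)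
  qed
  moreover have "(f \<longlongrightarrow> 0) at_top"
    unfolding f_def[abs_def]
  proof (rule tendsto_null_sum)
    fix i assume "i \<in> {..<N}"
    show "((\<lambda>t. psi (y i * (x i \<bullet> (t *\<^sub>R u))) * (x i \<bullet> v)\<^sup>2) \<longlongrightarrow> 0) at_top"
    proof (cases "i \<in> I_u N y x u")
      case True
      then show ?thesis
        by (simp add: orth)
    next
      case False
      then have "y i * (x i \<bullet> u) > 0"
        using \<open>i \<in> {..<N}\<close> by (auto simp: I_u_def)
      then have "filterlim (\<lambda>t. (y i * (x i \<bullet> u)) * t) at_top at_top"
        by (intro filterlim_tendsto_pos_mult_at_top[OF tendsto_const _ filterlim_ident])
      then have "((\<lambda>t. psi ((y i * (x i \<bullet> u)) * t) * (x i \<bullet> v)\<^sup>2) \<longlongrightarrow> 0 * (x i \<bullet> v)\<^sup>2) at_top"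
        by (intro tendsto_mult tendsto_const filterlim_compose[OF psi_tendsto_at_top])
      then show ?thesis
        by (simp add: mult_ac)
    qed
  qed
  ultimately have "m_const N y x \<le> 0"
    by (intro tendsto_lowerbound[of f 0]) (auto simp: always_eventually)
  then show ?thesis
    using m_const_nonneg[of N y x] by simp
qed

lemma sum_squares_pos_if_spanning:
  fixes x :: "'i \<Rightarrow> real^'n"
  assumes "finite J" "span (x ` J) = UNIV" "v \<noteq> 0"
  shows "(\<Sum>i\<in>J. (x i \<bullet> v)\<^sup>2) > 0"
proof (rule ccontr)
  assume "\<not> ?thesis"
  then have "(\<Sum>i\<in>J. (x i \<bullet> v)\<^sup>2) = 0"
    using sum_nonneg[of J "\<lambda>i. (x i \<bullet> v)\<^sup>2"] by simp
  then have "\<forall>i\<in>J. x i \<bullet> v = 0"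
    using assms(1) by (simp add: sum_nonneg_eq_0_iff)
  have "orthogonal v v"
  proof (rule orthogonal_to_span)
    show "v \<in> span (x ` J)"
      using assms(2) by simp
    fix z assume "z \<in> x ` J"
    then show "orthogonal v z"
      using \<open>\<forall>i\<in>J. x i \<bullet> v = 0\<close> by (auto simp: orthogonal_def inner_commute)
  qed
  then show False
    using assms(3) by (simp add: orthogonal_def)
qed

lemma sum_squares_bounded_below_on_sphere:
  fixes x :: "'i \<Rightarrow> real^'n"
  assumes "finite J" "span (x ` J) = UNIV"
  shows "\<exists>c>0. \<forall>w\<in>sphere 0 1. c \<le> (\<Sum>i\<in>J. (x i \<bullet> w)\<^sup>2)"
proof -
  have "sphere (0::real^'n) 1 \<noteq> {}"
    by simp
  moreover have "continuous_on (sphere 0 1) (\<lambda>w. \<Sum>i\<in>J. (x i \<bullet> w)\<^sup>2)"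
    by (intro continuous_intros)
  ultimately obtain v where v: "v \<in> sphere 0 1"
    and min: "\<forall>w\<in>sphere 0 1. (\<Sum>i\<in>J. (x i \<bullet> v)\<^sup>2) \<le> (\<Sum>i\<in>J. (x i \<bullet> w)\<^sup>2)"
    using continuous_attains_inf[OF compact_sphere] by blast
  have "(\<Sum>i\<in>J. (x i \<bullet> v)\<^sup>2) > 0"
    using v by (intro sum_squares_pos_if_spanning assms) auto
  then show ?thesis
    using min by blast
qed

lemma finite_family_uniform_positive_bound:
  fixes f :: "'a \<Rightarrow> 'b \<Rightarrow> real"
  assumes "finite F" and "\<forall>J\<in>F. \<exists>c>0. \<forall>w\<in>S. c \<le> f J w"
  obtains c where "c > 0" and "\<And>J w. J \<in> F \<Longrightarrow> w \<in> S \<Longrightarrow> c \<le> f J w"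
proof -
  obtain b where b: "\<forall>J\<in>F. b J > 0 \<and> (\<forall>w\<in>S. b J \<le> f J w)"
    using bchoice[OF assms(2)] by blast
  let ?c = "Min (insert 1 (b ` F))"
  have "?c > 0"
    using b assms(1) by (simp add: Min_gr_iff)
  moreover have "?c \<le> f J w" if "J \<in> F" "w \<in> S" for J w
  proof -
    have "?c \<le> b J"
      using assms(1) that(1) by (intro Min_le) auto
    also have "\<dots> \<le> f J w"
      using b that by blast
    finally show ?thesis .
  qed
  ultimately show ?thesis
    by (rule that)
qed

lemma m_const_pos_if_spanning:
  fixes x :: "nat \<Rightarrow> real^'n"
  assumes spanning: "\<forall>u\<in>sphere 0 1. span (x ` I_u N y x u) = UNIV"
  shows "m_const N y x > 0"
proof -
  define F where "F = I_u N y x ` sphere 0 1"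
  have "finite F"
  proof (rule finite_subset)
    show "F \<subseteq> Pow {..<N}"
      unfolding F_def using I_u_subset by blast
  qed simp
  moreover have "\<forall>J\<in>F. \<exists>c>0. \<forall>w\<in>sphere 0 1. c \<le> (\<Sum>i\<in>J. (x i \<bullet> w)\<^sup>2)"
  proof
    fix J assume "J \<in> F"
    then obtain u where "u \<in> sphere 0 1" "J = I_u N y x u"
      by (auto simp: F_def)
    then show "\<exists>c>0. \<forall>w\<in>sphere 0 1. c \<le> (\<Sum>i\<in>J. (x i \<bullet> w)\<^sup>2)"
      using spanning by (simp add: sum_squares_bounded_below_on_sphere finite_I_u)
  qed
  ultimately obtain c where c: "c > 0"
    and c_le: "\<And>J w. J \<in> F \<Longrightarrow> w \<in> sphere 0 1 \<Longrightarrow> c \<le> (\<Sum>i\<in>J. (x i \<bullet> w)\<^sup>2)"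
    by (rule finite_family_uniform_positive_bound) blast+
  have "2 / pi * c \<le> m_const N y x"
    unfolding m_const_def
  proof (rule cINF_greatest)
    fix \<theta> :: "real^'n"
    obtain u v where uv: "u \<in> sphere 0 1" "v \<in> sphere 0 1"
      and le: "2 / pi * (\<Sum>i\<in>I_u N y x u. (x i \<bullet> v)\<^sup>2) \<le> lambda_min (hess N y x \<theta>)"
      by (rule lambda_min_hess_ge)
    have "c \<le> (\<Sum>i\<in>I_u N y x u. (x i \<bullet> v)\<^sup>2)"
      using uv by (intro c_le) (auto simp: F_def)
    then have "2 / pi * c \<le> 2 / pi * (\<Sum>i\<in>I_u N y x u. (x i \<bullet> v)\<^sup>2)"
      by (rule mult_left_mono) simp
    then show "2 / pi * c \<le> lambda_min (hess N y x \<theta>)"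
      using le by linarith
  qed simp
  moreover have "0 < 2 / pi * c"
    using c(1) by simp
  ultimately show ?thesis
    by linarith
qed

section \<open>The condition number\<close>

lemma cond_num_finite_iff: "cond_num N y x < \<infinity> \<longleftrightarrow> m_const N y x \<noteq> 0"
  by (simp add: cond_num_def)

lemma cond_num_finite_iff_spanning:
  fixes x :: "nat \<Rightarrow> real^'n"
  shows "cond_num N y x < \<infinity> \<longleftrightarrow> (\<forall>u\<in>sphere 0 1. span (x ` I_u N y x u) = UNIV)"
proof
  assume "cond_num N y x < \<infinity>"
  then show "\<forall>u\<in>sphere 0 1. span (x ` I_u N y x u) = UNIV"
    using m_const_eq_0_if_not_spanning cond_num_finite_iff by blast
next
  assume "\<forall>u\<in>sphere 0 1. span (x ` I_u N y x u) = UNIV"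
  then have "m_const N y x > 0"
    by (rule m_const_pos_if_spanning)
  then show "cond_num N y x < \<infinity>"
    by (simp add: cond_num_def)
qed

lemma s_star_eq_Inf_card: "s_star N y x = (INF u\<in>sphere 0 1. card (I_u N y x u))"
proof -
  have "(\<Sum>i<N. indicator {..0::real} (y i * (x i \<bullet> u)) :: nat) = card (I_u N y x u)" for u
  proof -
    have "I_u N y x u = {..<N} \<inter> {i. y i * (x i \<bullet> u) \<le> 0}"
      by (auto simp: I_u_def)
    then show ?thesis
      by (simp add: sum.If_cases indicator_def)
  qed
  then show ?thesis
    by (simp add: s_star_def)
qed

lemma s_star_le_card:
  fixes x :: "nat \<Rightarrow> real^'n"
  assumes "u \<in> sphere 0 1" shows "s_star N y x \<le> card (I_u N y x u)"
  unfolding s_star_eq_Inf_card by (rule cINF_lower[OF _ assms]) simp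

lemma s_star_attained:
  fixes x :: "nat \<Rightarrow> real^'n"
  obtains u where "u \<in> sphere 0 1" "s_star N y x = card (I_u N y x u)"
proof -
  have "sphere (0::real^'n) 1 \<noteq> {}"
    by simp
  then have "s_star N y x \<in> (\<lambda>u. card (I_u N y x u)) ` sphere 0 1"
    unfolding s_star_eq_Inf_card by (intro Inf_nat_def1) simp
  then show ?thesis
    using that by blast
qed

lemma s_star_le_N: "s_star N y x \<le> N"
  for x :: "nat \<Rightarrow> real^'n"
proof -
  obtain u :: "real^'n" where u: "s_star N y x = card (I_u N y x u)"
    by (rule s_star_attained)
  have "card (I_u N y x u) \<le> card {..<N}"
    by (intro card_mono I_u_subset) simp
  then show ?thesis
    using u by simp
qed

lemma card_ge_dim_if_spanning:
  fixes x :: "'i \<Rightarrow> real^'n"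
  assumes "finite I" "span (x ` I) = UNIV"
  shows "CARD('n) \<le> card I"
proof -
  have "dim (UNIV :: (real^'n) set) \<le> card (x ` I)"
    using assms by (intro dim_le_card) auto
  also have "\<dots> \<le> card I"
    using assms(1) by (rule card_image_le)
  finally show ?thesis
    by simp
qed

lemma cond_num_finite_iff_s_star:
  fixes x :: "nat \<Rightarrow> real^'n"
  assumes general_position: "\<forall>I. I \<subseteq> {..<N} \<and> card I > CARD('n) - 1 \<longrightarrow> span (x ` I) = UNIV"
  shows "cond_num N y x < \<infinity> \<longleftrightarrow> s_star N y x > CARD('n) - 1"
proof
  assume "cond_num N y x < \<infinity>"
  obtain u where u: "u \<in> sphere 0 1" "s_star N y x = card (I_u N y x u)"
    by (rule s_star_attained)
  then have "span (x ` I_u N y x u) = UNIV"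
    using \<open>cond_num N y x < \<infinity>\<close> cond_num_finite_iff_spanning by blast
  then have "CARD('n) \<le> card (I_u N y x u)"
    by (rule card_ge_dim_if_spanning[OF finite_I_u])
  moreover have "CARD('n) > 0"
    by simp
  ultimately show "s_star N y x > CARD('n) - 1"
    using u(2) by arith
next
  assume s_star: "s_star N y x > CARD('n) - 1"
  have "\<forall>u\<in>sphere 0 1. span (x ` I_u N y x u) = UNIV"
  proof
    fix u :: "real^'n" assume "u \<in> sphere 0 1"
    then have "card (I_u N y x u) > CARD('n) - 1"
      using s_star_le_card[of u N y x] s_star by linarith
    then show "span (x ` I_u N y x u) = UNIV"
      using general_position I_u_subset[of N y x u] by blast
  qed
  then show "cond_num N y x < \<infinity>"
    using cond_num_finite_iff_spanning by blast
qed

lemma Min_sum_squares_nonneg: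
  assumes "finite F" "F \<noteq> {}"
  shows "0 \<le> Min ((\<lambda>I. \<Sum>i\<in>I. \<bar>x i \<bullet> v\<bar>\<^sup>2) ` F)"
  using assms by (simp add: Min_ge_iff sum_nonneg)

lemma P_fun_le_sum:
  fixes x :: "nat \<Rightarrow> real^'n"
  assumes v: "v \<in> sphere 0 1" and K: "K \<subseteq> {..<N}" "card K = s"
  shows "P_fun N x s \<le> (\<Sum>i\<in>K. (x i \<bullet> v)\<^sup>2)"
proof -
  define F where "F = {I. I \<subseteq> {..<N} \<and> card I = s}"
  have F: "finite F" "K \<in> F"
    using K by (auto simp: F_def intro: finite_subset[of _ "Pow {..<N}"])
  have "P_fun N x s \<le> Min ((\<lambda>I. \<Sum>i\<in>I. \<bar>x i \<bullet> v\<bar>\<^sup>2) ` F)"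
    unfolding P_fun_def F_def[symmetric]
  proof (rule cINF_lower[OF _ v])
    show "bdd_below ((\<lambda>w. Min ((\<lambda>I. \<Sum>i\<in>I. \<bar>x i \<bullet> w\<bar>\<^sup>2) ` F)) ` sphere 0 1)"
      using F by (intro bdd_belowI2[of _ 0] Min_sum_squares_nonneg) auto
  qed
  also have "\<dots> \<le> (\<Sum>i\<in>K. (x i \<bullet> v)\<^sup>2)"
    using F by (intro Min_le) auto
  finally show ?thesis .
qed

lemma P_fun_nonneg:
  fixes x :: "nat \<Rightarrow> real^'n"
  assumes "s \<le> N" shows "0 \<le> P_fun N x s"
proof -
  obtain K where "K \<subseteq> {..<N}" "card K = s"
    using assms obtain_subset_with_card_n[of s "{..<N}"] by auto
  then have "finite {I. I \<subseteq> {..<N} \<and> card I = s}" "{I. I \<subseteq> {..<N} \<and> card I = s} \<noteq> {}"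
    by (auto intro: finite_subset[of _ "Pow {..<N}"])
  then show ?thesis
    unfolding P_fun_def by (intro cINF_greatest Min_sum_squares_nonneg) auto
qed

lemma m_const_ge_P_fun: "2 / pi * P_fun N x (s_star N y x) \<le> m_const N y x"
  for x :: "nat \<Rightarrow> real^'n"
  unfolding m_const_def
proof (rule cINF_greatest)
  fix \<theta> :: "real^'n"
  obtain u v where uv: "u \<in> sphere 0 1" "v \<in> sphere 0 1"
    and le: "2 / pi * (\<Sum>i\<in>I_u N y x u. (x i \<bullet> v)\<^sup>2) \<le> lambda_min (hess N y x \<theta>)"
    by (rule lambda_min_hess_ge)
  obtain K where K: "K \<subseteq> I_u N y x u" "card K = s_star N y x"
    using s_star_le_card[OF uv(1)] obtain_subset_with_card_n by metis
  have "K \<subseteq> {..<N}"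
    using K(1) I_u_subset[of N y x u] by blast
  then have "P_fun N x (s_star N y x) \<le> (\<Sum>i\<in>K. (x i \<bullet> v)\<^sup>2)"
    by (rule P_fun_le_sum[OF uv(2) _ K(2)])
  also have "\<dots> \<le> (\<Sum>i\<in>I_u N y x u. (x i \<bullet> v)\<^sup>2)"
    using K(1) by (intro sum_mono2 finite_I_u) auto
  finally have "2 / pi * P_fun N x (s_star N y x) \<le> 2 / pi * (\<Sum>i\<in>I_u N y x u. (x i \<bullet> v)\<^sup>2)"
    by (rule mult_left_mono) simp
  then show "2 / pi * P_fun N x (s_star N y x) \<le> lambda_min (hess N y x \<theta>)"
    using le by linarith
qed simp

lemma cond_num_le:
  fixes x :: "nat \<Rightarrow> real^'n"
  shows "cond_num N y x \<le>
           (if P_fun N x (s_star N y x) = 0 then \<infinity>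
            else ereal (pi / 2 * lambda_max (\<Sum>i<N. outer (x i)) / P_fun N x (s_star N y x)))"
proof (cases "P_fun N x (s_star N y x) = 0")
  case False
  define P where "P = P_fun N x (s_star N y x)"
  define \<Lambda> where "\<Lambda> = lambda_max (\<Sum>i<N. outer (x i))"
  have "0 \<le> P"
    unfolding P_def by (rule P_fun_nonneg[OF s_star_le_N])
  then have P: "P > 0"
    using False by (simp add: P_def)
  have m: "2 / pi * P \<le> m_const N y x"
    unfolding P_def by (rule m_const_ge_P_fun)
  moreover have "0 < 2 / pi * P"
    using P by simp
  ultimately have m_pos: "m_const N y x > 0"
    by linarith
  have "L_const N y x / m_const N y x \<le> \<Lambda> / m_const N y x"
    unfolding \<Lambda>_def by (rule divide_right_mono[OF L_const_le]) (use m_pos in simp)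
  also have "\<dots> \<le> \<Lambda> / (2 / pi * P)"
    by (rule divide_left_mono[OF m])
      (use P m_pos lambda_max_outer_sum_nonneg in \<open>auto simp: \<Lambda>_def\<close>)
  also have "\<dots> = pi / 2 * \<Lambda> / P"
    by (simp add: field_simps)
  finally show ?thesis
    using False m_pos by (simp add: cond_num_def P_def \<Lambda>_def)
qed simp

theorem theorem2p1:
  fixes N :: nat and y :: "nat \<Rightarrow> real" and x :: "nat \<Rightarrow> real^'n"
  assumes "N \<ge> 1" and "CARD('n) \<ge> 2"
    and "\<forall>i<N. y i \<in> {-1, 1}"
  shows "(cond_num N y x < \<infinity> \<longleftrightarrow>
            (\<forall>u\<in>sphere 0 1. span (x ` I_u N y x u) = UNIV))
         \<and> ((\<forall>I. I \<subseteq> {..<N} \<and> card I > CARD('n) - 1 \<longrightarrow> span (x ` I) = UNIV) \<longrightarrow>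
           (cond_num N y x < \<infinity> \<longleftrightarrow> s_star N y x > CARD('n) - 1))
         \<and> cond_num N y x \<le>
           (if P_fun N x (s_star N y x) = 0 then \<infinity>
            else ereal (pi / 2 * lambda_max (\<Sum>i<N. outer (x i)) / P_fun N x (s_star N y x)))"
proof (intro conjI impI)
  show "cond_num N y x < \<infinity> \<longleftrightarrow> (\<forall>u\<in>sphere 0 1. span (x ` I_u N y x u) = UNIV)"
    by (rule cond_num_finite_iff_spanning)
  show "cond_num N y x < \<infinity> \<longleftrightarrow> s_star N y x > CARD('n) - 1"
    if "\<forall>I. I \<subseteq> {..<N} \<and> card I > CARD('n) - 1 \<longrightarrow> span (x ` I) = UNIV"
    using that by (rule cond_num_finite_iff_s_star)
  show "cond_num N y x \<le>
      (if P_fun N x (s_star N y x) = 0 then \<infinity>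
       else ereal (pi / 2 * lambda_max (\<Sum>i<N. outer (x i)) / P_fun N x (s_star N y x)))"
    by (rule cond_num_le)
qed

end
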